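(* Let $\underline\phi\le\overline\phi$ and $\underline\psi\le\overline\psi$ be functions on $[0,1]$ satisfying (P1)–(P3). Then the pair $(C^{\mathrm M}_{\underline\phi,\underline\psi},C^{\mathrm M}_{\overline\phi,\overline\psi})$ is an imprecise copula which is coherent, i.e. with $\mathcal C=\{C: C \text{ a copula}, C^{\mathrm M}_{\underline\phi,\underline\psi}\le C\le C^{\mathrm M}_{\overline\phi,\overline\psi}\}$ one has $C^{\mathrm M}_{\underline\phi,\underline\psi}=\inf_{C\in\mathcal C}C$ and $C^{\mathrm M}_{\overline\phi,\overline\psi}=\sup_{C\in\mathcal C}C$ pointwise.
   Context: (P1) $\phi,\psi$ non-decreasing; (P2) $\phi(0)=\psi(0)=0$, $\phi(1)=\psi(1)=1$; (P3) $\phi(u)/u$, $\psi(v)/v$ non-increasing on $(0,1]$. $C^{\mathrm M}_{\phi,\psi}(u,v)=uv\min\{\phi(u)/u,\psi(v)/v\}$ for $uv>0$ and $0$ otherwise. A copula is $C:[0,1]^2\to[0,1]$ with $C(u,0)=C(0,v)=0$, $C(u,1)=u$, $C(1,v)=v$, and $C(u_2,v_2)-C(u_1,v_2)-C(u_2,v_1)+C(u_1,v_1)\ge0$ for $u_1\le u_2$, $v_1\le v_2$. An imprecise copula is a pair $(\underline C,\overline C)$ of maps $[0,1]^2\to[0,1]$ both satisfying the boundary conditions of a copula and, for all $u_1\le u_2$, $v_1\le v_2$: $\underline C(u_2,v_2)+\overline C(u_1,v_1)-\underline C(u_2,v_1)-\underline C(u_1,v_2)\ge0$; $\overline C(u_2,v_2)+\underline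 C(u_1,v_1)-\underline C(u_2,v_1)-\underline C(u_1,v_2)\ge0$; $\overline C(u_2,v_2)+\overline C(u_1,v_1)-\overline C(u_2,v_1)-\underline C(u_1,v_2)\ge0$; $\overline C(u_2,v_2)+\overline C(u_1,v_1)-\underline C(u_2,v_1)-\overline C(u_1,v_2)\ge0$. *)

theory Defs
  imports "HOL-Analysis.Analysis"
begin

definition P123 :: "(real \<Rightarrow> real) \<Rightarrow> bool" where
  "P123 f \<longleftrightarrow>
     (\<forall>x\<in>{0..1}. \<forall>y\<in>{0..1}. x \<le> y \<longrightarrow> f x \<le> f y) \<and>
     f 0 = 0 \<and> f 1 = 1 \<and>
     (\<forall>x\<in>{0<..1}. \<forall>y\<in>{0<..1}. x \<le> y \<longrightarrow> f y / y \<le> f x / x)"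

definition CM :: "(real \<Rightarrow> real) \<Rightarrow> (real \<Rightarrow> real) \<Rightarrow> real \<Rightarrow> real \<Rightarrow> real" where
  "CM \<phi> \<psi> u v = (if u * v > 0 then u * v * min (\<phi> u / u) (\<psi> v / v) else 0)"

definition copula_boundary :: "(real \<Rightarrow> real \<Rightarrow> real) \<Rightarrow> bool" where
  "copula_boundary C \<longleftrightarrow>
     (\<forall>u\<in>{0..1}. \<forall>v\<in>{0..1}. C u v \<in> {0..1}) \<and>
     (\<forall>u\<in>{0..1}. C u 0 = 0 \<and> C 0 u = 0 \<and> C u 1 = u \<and> C 1 u = u)"

definition copula :: "(real \<Rightarrow> real \<Rightarrow> real) \<Rightarrow> bool" where
  "copula C \<longleftrightarrow> copula_boundary C \<and>
     (\<forall>u1\<in>{0..1}. \<forall>u2\<in>{0..1}. \<forall>v1\<in>{0..1}. \<forall>v2\<in>{0..1}.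
        u1 \<le> u2 \<longrightarrow> v1 \<le> v2 \<longrightarrow> C u2 v2 - C u1 v2 - C u2 v1 + C u1 v1 \<ge> 0)"

definition imprecise_copula :: "(real \<Rightarrow> real \<Rightarrow> real) \<Rightarrow> (real \<Rightarrow> real \<Rightarrow> real) \<Rightarrow> bool" where
  "imprecise_copula L U \<longleftrightarrow> copula_boundary L \<and> copula_boundary U \<and>
     (\<forall>u1\<in>{0..1}. \<forall>u2\<in>{0..1}. \<forall>v1\<in>{0..1}. \<forall>v2\<in>{0..1}.
        u1 \<le> u2 \<longrightarrow> v1 \<le> v2 \<longrightarrow>
          L u2 v2 + U u1 v1 - L u2 v1 - L u1 v2 \<ge> 0 \<and>
          U u2 v2 + L u1 v1 - L u2 v1 - L u1 v2 \<ge> 0 \<and>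
          U u2 v2 + U u1 v1 - U u2 v1 - L u1 v2 \<ge> 0 \<and>
          U u2 v2 + U u1 v1 - L u2 v1 - U u1 v2 \<ge> 0)"

definition copulas_between :: "(real \<Rightarrow> real \<Rightarrow> real) \<Rightarrow> (real \<Rightarrow> real \<Rightarrow> real) \<Rightarrow> (real \<Rightarrow> real \<Rightarrow> real) set" where
  "copulas_between L U = {C. copula C \<and>
     (\<forall>u\<in>{0..1}. \<forall>v\<in>{0..1}. L u v \<le> C u v \<and> C u v \<le> U u v)}"

end

theory Submission
  imports Defs
begin

text \<open>On the unit square the bound generated by \<open>\<phi>, \<psi>\<close> is
\<open>min (v * \<phi> u) (u * \<psi> v)\<close>, and the monotonicity (P1) together with the decreasing
ratios (P3) makes the mass of this minimum on every rectangle nonnegative; so both bounds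
are copulas. They are ordered pointwise, hence each inequality of an imprecise copula is
the 2-increasing inequality of one bound plus a comparison of corner values. Both bounds
lie in the set of copulas between them, so the infimum and supremum are attained.\<close>

lemma increment_le_of_ratio_le:
  fixes u1 v1 v2 a1 a2 b1 b2 :: real
  assumes "0 < u1" "0 < v1" "v1 \<le> v2" "a1 \<le> a2"
    and ratio: "b2 * v1 \<le> b1 * v2" and corner: "u1 * b1 \<le> v1 * a1"
  shows "u1 * (b2 - b1) \<le> a2 * (v2 - v1)"
proof -
  have "v1 * (u1 * (b2 - b1)) = u1 * (b2 * v1) - u1 * b1 * v1" by (simp add: algebra_simps)
  also have "\<dots> \<le> u1 * (b1 * v2) - u1 * b1 * v1" using ratio assms(1) by simp
  also have "\<dots> = (u1 * b1) * (v2 - v1)" by (simp add: algebra_simps)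
  also have "\<dots> \<le> (v1 * a1) * (v2 - v1)" using corner assms(3) by (simp add: mult_right_mono)
  also have "\<dots> \<le> (v1 * a2) * (v2 - v1)" using assms by (simp add: mult_right_mono)
  also have "\<dots> = v1 * (a2 * (v2 - v1))" by (simp add: algebra_simps)
  finally show ?thesis using assms(2) by (simp add: mult_le_cancel_left_pos)
qed

lemma rectangle_mass_min_nonneg:
  fixes u1 u2 v1 v2 a1 a2 b1 b2 :: real
  assumes "0 \<le> u1" "u1 \<le> u2" "0 \<le> v1" "v1 \<le> v2"
    and "0 \<le> a1" "a1 \<le> a2" "0 \<le> b1" "b1 \<le> b2"
    and ratio_a: "a2 * u1 \<le> a1 * u2" and ratio_b: "b2 * v1 \<le> b1 * v2"
  shows "min (v2 * a2) (u2 * b2) - min (v2 * a1) (u1 * b2)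
           - min (v1 * a2) (u2 * b1) + min (v1 * a1) (u1 * b1) \<ge> 0"
proof (cases "u1 = 0 \<or> v1 = 0")
  case True
  have "v1 * a2 \<le> v2 * a2" "u2 * b1 \<le> u2 * b2" "v2 * a1 \<le> v2 * a2" "u1 * b2 \<le> u2 * b2"
    using assms by (simp_all add: mult_mono)
  with True show ?thesis using assms by (auto simp: min_def)
next
  case False
  with assms have pos: "0 < u1" "0 < v1" by auto
  have "(v2 - v1) * (a2 - a1) \<ge> 0" "(u2 - u1) * (b2 - b1) \<ge> 0" using assms by simp_all
  \<comment> \<open>the term attaining the minimum at the corner \<open>(u1, v1)\<close> decides which ratio condition is used\<close>
  moreover have "u1 * (b2 - b1) \<le> a2 * (v2 - v1)" if "u1 * b1 \<le> v1 * a1"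
    using increment_le_of_ratio_le[OF pos assms(4,6) ratio_b that] .
  moreover have "v1 * (a2 - a1) \<le> b2 * (u2 - u1)" if "v1 * a1 \<le> u1 * b1"
    using increment_le_of_ratio_le[OF pos(2,1) assms(2,8) _ that] ratio_a
    by (simp add: mult.commute)
  ultimately show ?thesis by (auto simp: min_def algebra_simps)
qed

lemma P123_mono:
  assumes "P123 f" "x \<in> {0..1}" "y \<in> {0..1}" "x \<le> y"
  shows "f x \<le> f y"
  using assms unfolding P123_def by blast

lemma P123_ratio:
  assumes "P123 f" "0 < x" "x \<le> y" "y \<le> 1"
  shows "f y * x \<le> f x * y"
proof -
  have "f y / y \<le> f x / x" using assms unfolding P123_def by auto
  with assms(2,3) show ?thesis by (simp add: divide_simps)
qed

lemma P123_bounds: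
  assumes "P123 f" "x \<in> {0..1}"
  shows "0 \<le> f x" "f x \<le> 1" "x \<le> f x"
proof -
  have "f 0 = 0" "f 1 = 1" using assms(1) unfolding P123_def by auto
  then show "0 \<le> f x" "f x \<le> 1"
    using P123_mono[OF assms(1), of 0 x] P123_mono[OF assms(1), of x 1] assms(2) by auto
  show "x \<le> f x"
  proof (cases "x = 0")
    case False
    with assms(2) have "0 < x" by simp
    with P123_ratio[OF assms(1) this, of 1] assms(2) \<open>f 1 = 1\<close> show ?thesis by simp
  qed (simp add: \<open>f 0 = 0\<close>)
qed

lemma CM_eq_min:
  assumes "\<phi> 0 = 0" "\<psi> 0 = 0" "0 \<le> u" "0 \<le> v"
  shows "CM \<phi> \<psi> u v = min (v * \<phi> u) (u * \<psi> v)"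
proof (cases "u = 0 \<or> v = 0")
  case False
  with assms have "0 < u" "0 < v" by auto
  then show ?thesis unfolding CM_def by (simp add: min_mult_distrib_left)
qed (use assms in \<open>auto simp: CM_def\<close>)

lemma CM_copula:
  assumes \<phi>: "P123 \<phi>" and \<psi>: "P123 \<psi>"
  shows "copula (CM \<phi> \<psi>)"
proof -
  have zero: "\<phi> 0 = 0" "\<psi> 0 = 0" using assms unfolding P123_def by auto
  have CM: "CM \<phi> \<psi> u v = min (v * \<phi> u) (u * \<psi> v)" if "u \<in> {0..1}" "v \<in> {0..1}" for u v
    using CM_eq_min[of \<phi> \<psi> u v] zero that by simp
  have "copula_boundary (CM \<phi> \<psi>)"
    unfolding copula_boundary_def
  proof (intro conjI ballI)
    fix u v :: real assume u: "u \<in> {0..1}" and v: "v \<in> {0..1}"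
    have "v * \<phi> u \<in> {0..1}"
      using P123_bounds[OF \<phi> u] u v by (simp add: mult_le_one)
    with CM[OF u v] u v show "CM \<phi> \<psi> u v \<in> {0..1}"
      using P123_bounds[OF \<psi> v] by (auto simp: min_def)
  next
    fix u :: real assume u: "u \<in> {0..1}"
    have "\<phi> 1 = 1" "\<psi> 1 = 1" using assms unfolding P123_def by auto
    with zero u P123_bounds(3)[OF \<phi> u] P123_bounds(3)[OF \<psi> u]
    show "CM \<phi> \<psi> u 0 = 0" "CM \<phi> \<psi> 0 u = 0" "CM \<phi> \<psi> u 1 = u" "CM \<phi> \<psi> 1 u = u"
      using CM[OF u, of 0] CM[OF _ u, of 0] CM[OF u, of 1] CM[OF _ u, of 1] by auto
  qed
  moreover have "CM \<phi> \<psi> u2 v2 - CM \<phi> \<psi> u1 v2 - CM \<phi> \<psi> u2 v1 + CM \<phi> \<psi> u1 v1 \<ge> 0"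
    if u: "u1 \<in> {0..1}" "u2 \<in> {0..1}" "u1 \<le> u2" and v: "v1 \<in> {0..1}" "v2 \<in> {0..1}" "v1 \<le> v2"
    for u1 u2 v1 v2
  proof -
    have "\<phi> u2 * u1 \<le> \<phi> u1 * u2"
      using P123_ratio[OF \<phi>, of u1 u2] u zero by (cases "u1 = 0") auto
    moreover have "\<psi> v2 * v1 \<le> \<psi> v1 * v2"
      using P123_ratio[OF \<psi>, of v1 v2] v zero by (cases "v1 = 0") auto
    ultimately have "min (v2 * \<phi> u2) (u2 * \<psi> v2) - min (v2 * \<phi> u1) (u1 * \<psi> v2)
        - min (v1 * \<phi> u2) (u2 * \<psi> v1) + min (v1 * \<phi> u1) (u1 * \<psi> v1) \<ge> 0"
      using u v P123_mono[OF \<phi> u] P123_mono[OF \<psi> v] P123_bounds[OF \<phi> u(1)] P123_bounds[OF \<psi> v(1)]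
      by (intro rectangle_mass_min_nonneg) auto
    with u v show ?thesis by (simp add: CM)
  qed
  ultimately show ?thesis unfolding copula_def by blast
qed

lemma CM_le_CM:
  assumes "\<phi> 0 = 0" "\<psi> 0 = 0" "\<phi>' 0 = 0" "\<psi>' 0 = 0" "0 \<le> u" "0 \<le> v"
    and "\<phi> u \<le> \<phi>' u" "\<psi> v \<le> \<psi>' v"
  shows "CM \<phi> \<psi> u v \<le> CM \<phi>' \<psi>' u v"
proof -
  have "v * \<phi> u \<le> v * \<phi>' u" "u * \<psi> v \<le> u * \<psi>' v"
    using assms by (simp_all add: mult_left_mono)
  then have "min (v * \<phi> u) (u * \<psi> v) \<le> min (v * \<phi>' u) (u * \<psi>' v)"
    by (rule min.mono)
  with assms show ?thesis by (simp add: CM_eq_min)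
qed

lemma imprecise_copula_of_copulas:
  assumes L: "copula L" and U: "copula U" and le: "\<forall>u\<in>{0..1}. \<forall>v\<in>{0..1}. L u v \<le> U u v"
  shows "imprecise_copula L U"
  unfolding imprecise_copula_def
proof (intro conjI ballI impI)
  show "copula_boundary L" "copula_boundary U" using L U unfolding copula_def by auto
  fix u1 u2 v1 v2 :: real
  assume h: "u1 \<in> {0..1}" "u2 \<in> {0..1}" "v1 \<in> {0..1}" "v2 \<in> {0..1}" "u1 \<le> u2" "v1 \<le> v2"
  have "L u2 v2 - L u1 v2 - L u2 v1 + L u1 v1 \<ge> 0" "U u2 v2 - U u1 v2 - U u2 v1 + U u1 v1 \<ge> 0"
    using L U h unfolding copula_def by blast+
  moreover have "L u1 v1 \<le> U u1 v1" "L u2 v2 \<le> U u2 v2" "L u1 v2 \<le> U u1 v2" "L u2 v1 \<le> U u2 v1"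
    using le h by auto
  ultimately show "L u2 v2 + U u1 v1 - L u2 v1 - L u1 v2 \<ge> 0"
    "U u2 v2 + L u1 v1 - L u2 v1 - L u1 v2 \<ge> 0"
    "U u2 v2 + U u1 v1 - U u2 v1 - L u1 v2 \<ge> 0"
    "U u2 v2 + U u1 v1 - L u2 v1 - U u1 v2 \<ge> 0" by linarith+
qed

lemma bounds_mem_copulas_between:
  assumes "copula L" "copula U" "\<forall>u\<in>{0..1}. \<forall>v\<in>{0..1}. L u v \<le> U u v"
  shows "L \<in> copulas_between L U" "U \<in> copulas_between L U"
  using assms unfolding copulas_between_def by auto

lemma INF_copulas_between:
  assumes "L \<in> copulas_between L U" "u \<in> {0..1}" "v \<in> {0..1}"
  shows "(INF C\<in>copulas_between L U. C u v) = L u v"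
  by (rule cInf_eq_minimum) (use assms in \<open>auto simp: copulas_between_def\<close>)

lemma SUP_copulas_between:
  assumes "U \<in> copulas_between L U" "u \<in> {0..1}" "v \<in> {0..1}"
  shows "(SUP C\<in>copulas_between L U. C u v) = U u v"
  by (rule cSup_eq_maximum) (use assms in \<open>auto simp: copulas_between_def\<close>)

theorem corollary2:
  fixes \<phi>l \<phi>u \<psi>l \<psi>u :: "real \<Rightarrow> real"
  assumes "P123 \<phi>l" and "P123 \<phi>u" and "P123 \<psi>l" and "P123 \<psi>u"
    and "\<forall>x\<in>{0..1}. \<phi>l x \<le> \<phi>u x"
    and "\<forall>x\<in>{0..1}. \<psi>l x \<le> \<psi>u x"
  shows "imprecise_copula (CM \<phi>l \<psi>l) (CM \<phi>u \<psi>u) \<and>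
         copulas_between (CM \<phi>l \<psi>l) (CM \<phi>u \<psi>u) \<noteq> {} \<and>
         (\<forall>u\<in>{0..1}. \<forall>v\<in>{0..1}.
            CM \<phi>l \<psi>l u v = (INF C\<in>copulas_between (CM \<phi>l \<psi>l) (CM \<phi>u \<psi>u). C u v) \<and>
            CM \<phi>u \<psi>u u v = (SUP C\<in>copulas_between (CM \<phi>l \<psi>l) (CM \<phi>u \<psi>u). C u v))"
proof -
  have copulas: "copula (CM \<phi>l \<psi>l)" "copula (CM \<phi>u \<psi>u)"
    using CM_copula assms(1-4) by blast+
  have le: "\<forall>u\<in>{0..1}. \<forall>v\<in>{0..1}. CM \<phi>l \<psi>l u v \<le> CM \<phi>u \<psi>u u v"
    using assms unfolding P123_def by (auto intro: CM_le_CM)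
  note mem = bounds_mem_copulas_between[OF copulas le]
  show ?thesis
    using imprecise_copula_of_copulas[OF copulas le] mem
      INF_copulas_between[OF mem(1)] SUP_copulas_between[OF mem(2)] by auto
qed

end
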